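(* Let $f:M^2\to\mathbb{R}^3$ be a $C^\infty$-map on a $2$-manifold and $p$ a cross cap singularity of $f$. Then the first fundamental form $d\sigma^2:=df\cdot df$ of $f$ is an admissible metric, and $p$ is an intrinsic cross cap of $d\sigma^2$.
   Context: A point $p$ is a cross cap of $f$ if there are diffeomorphism germs $\phi$ of $(\mathbb{R}^2,0)$ onto a neighborhood of $p$ (in coordinates) and $\Phi$ of $\mathbb{R}^3$ such that $\Phi\circ f\circ\phi(u,v)=(u,uv,v^2)$. For a smooth positive semi-definite metric $d\sigma^2$ with $\langle\cdot,\cdot\rangle=d\sigma^2$: singular points are where it is not positive definite; $\mathcal{N}_p=\{v: d\sigma^2(v,w)=0\ \forall w\}$; the Kossowski pseudo-connection is $\Gamma(X,Y,Z)=\tfrac12\bigl(X\langle Y,Z\rangle+Y\langle X,Z\rangle-Z\langle X,Y\rangle+\langle[X,Y],Z\rangle-\langle[X,Z],Y\rangle-\langle[Y,Z],X\rangle\bigr)$; admissible: at each singular point $p$, $\Gamma(V_1,V_2,V_3)(p)=0$ whenever $V_3(p)\in\mathcal{N}_p$. A singular point $p$ of an admissible metric is an intrinsic cross cap if, in a local coordinate system $(u,v)$ centered at $p$ with $d\sigma^2=E\,du^2+2F\,du\,dv+G\,dv^2$ and $\delta=EG-F^2$, one has $\delta_{uu}\delta_{vv}-\delta_{uv}^2\neq0$ at $p$. *)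

theory Defs
  imports "HOL-Analysis.Analysis"
begin

text \<open>Local setting: the surface M is represented by an open coordinate domain
  U of R^2 = real \<times> real; the target R^3 is real \<times> real \<times> real.\<close>

type_synonym R2 = "real \<times> real"
type_synonym R3 = "real \<times> real \<times> real"

fun Ck_on :: "nat \<Rightarrow> 'a::euclidean_space set \<Rightarrow> ('a \<Rightarrow> 'b::real_normed_vector) \<Rightarrow> bool" where
  "Ck_on 0 U f = continuous_on U f"
| "Ck_on (Suc k) U f =
     (f differentiable_on U \<and> (\<forall>b\<in>Basis. Ck_on k U (\<lambda>x. frechet_derivative f (at x) b)))"

definition smooth_on :: "'a::euclidean_space set \<Rightarrow> ('a \<Rightarrow> 'b::real_normed_vector) \<Rightarrow> bool" where
  "smooth_on U f \<longleftrightarrow> (\<forall>k. Ck_on k U f)"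

definition diffeo_on :: "'a::euclidean_space set \<Rightarrow> ('a \<Rightarrow> 'a) \<Rightarrow> bool" where
  "diffeo_on V \<phi> \<longleftrightarrow> open V \<and> smooth_on V \<phi> \<and> inj_on \<phi> V \<and> open (\<phi> ` V)
      \<and> smooth_on (\<phi> ` V) (inv_into V \<phi>)"

definition cross_cap :: "R2 set \<Rightarrow> (R2 \<Rightarrow> R3) \<Rightarrow> R2 \<Rightarrow> bool" where
  "cross_cap U f p \<longleftrightarrow>
     (\<exists>V \<phi> W \<Phi>. (0::R2) \<in> V \<and> diffeo_on V \<phi> \<and> \<phi> 0 = p \<and> \<phi> ` V \<subseteq> U
        \<and> f p \<in> W \<and> diffeo_on W \<Phi> \<and> f ` (\<phi> ` V) \<subseteq> W
        \<and> (\<forall>u v. (u, v) \<in> V \<longrightarrow> \<Phi> (f (\<phi> (u, v))) = (u, u * v, v ^ 2)))"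

definition coefE :: "(R2 \<Rightarrow> R2 \<Rightarrow> R2 \<Rightarrow> real) \<Rightarrow> R2 \<Rightarrow> real" where
  "coefE g q = g q (1, 0) (1, 0)"
definition coefF :: "(R2 \<Rightarrow> R2 \<Rightarrow> R2 \<Rightarrow> real) \<Rightarrow> R2 \<Rightarrow> real" where
  "coefF g q = g q (1, 0) (0, 1)"
definition coefG :: "(R2 \<Rightarrow> R2 \<Rightarrow> R2 \<Rightarrow> real) \<Rightarrow> R2 \<Rightarrow> real" where
  "coefG g q = g q (0, 1) (0, 1)"

definition smooth_psd_metric :: "R2 set \<Rightarrow> (R2 \<Rightarrow> R2 \<Rightarrow> R2 \<Rightarrow> real) \<Rightarrow> bool" where
  "smooth_psd_metric U g \<longleftrightarrow> open U \<and>
     (\<forall>q\<in>U. bilinear (g q) \<and> (\<forall>v w. g q v w = g q w v) \<and> (\<forall>v. 0 \<le> g q v v))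
     \<and> smooth_on U (coefE g) \<and> smooth_on U (coefF g) \<and> smooth_on U (coefG g)"

definition singular_point :: "(R2 \<Rightarrow> R2 \<Rightarrow> R2 \<Rightarrow> real) \<Rightarrow> R2 \<Rightarrow> bool" where
  "singular_point g p \<longleftrightarrow> \<not> (\<forall>v. v \<noteq> 0 \<longrightarrow> g p v v > 0)"

definition null_space :: "(R2 \<Rightarrow> R2 \<Rightarrow> R2 \<Rightarrow> real) \<Rightarrow> R2 \<Rightarrow> R2 set" where
  "null_space g p = {v. \<forall>w. g p v w = 0}"

definition vf_deriv :: "(R2 \<Rightarrow> R2) \<Rightarrow> (R2 \<Rightarrow> real) \<Rightarrow> R2 \<Rightarrow> real" where
  "vf_deriv X h q = frechet_derivative h (at q) (X q)"

definition lie_bracket :: "(R2 \<Rightarrow> R2) \<Rightarrow> (R2 \<Rightarrow> R2) \<Rightarrow> R2 \<Rightarrow> R2" where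
  "lie_bracket X Y q = frechet_derivative Y (at q) (X q) - frechet_derivative X (at q) (Y q)"

definition metric_pair :: "(R2 \<Rightarrow> R2 \<Rightarrow> R2 \<Rightarrow> real) \<Rightarrow> (R2 \<Rightarrow> R2) \<Rightarrow> (R2 \<Rightarrow> R2) \<Rightarrow> R2 \<Rightarrow> real" where
  "metric_pair g X Y q = g q (X q) (Y q)"

definition kossowski :: "(R2 \<Rightarrow> R2 \<Rightarrow> R2 \<Rightarrow> real) \<Rightarrow> (R2 \<Rightarrow> R2) \<Rightarrow> (R2 \<Rightarrow> R2) \<Rightarrow> (R2 \<Rightarrow> R2) \<Rightarrow> R2 \<Rightarrow> real" where
  "kossowski g X Y Z q = (1/2) *
     ( vf_deriv X (metric_pair g Y Z) q + vf_deriv Y (metric_pair g X Z) q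
     - vf_deriv Z (metric_pair g X Y) q
     + g q (lie_bracket X Y q) (Z q) - g q (lie_bracket X Z q) (Y q)
     - g q (lie_bracket Y Z q) (X q))"

definition admissible_metric :: "R2 set \<Rightarrow> (R2 \<Rightarrow> R2 \<Rightarrow> R2 \<Rightarrow> real) \<Rightarrow> bool" where
  "admissible_metric U g \<longleftrightarrow> smooth_psd_metric U g \<and>
     (\<forall>p\<in>U. singular_point g p \<longrightarrow>
        (\<forall>W V1 V2 V3. open W \<and> p \<in> W \<and> W \<subseteq> U \<and>
            smooth_on W V1 \<and> smooth_on W V2 \<and> smooth_on W V3 \<and> V3 p \<in> null_space g p
            \<longrightarrow> kossowski g V1 V2 V3 p = 0))"

definition pderiv_dir :: "R2 \<Rightarrow> (R2 \<Rightarrow> real) \<Rightarrow> R2 \<Rightarrow> real" where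
  "pderiv_dir b h q = frechet_derivative h (at q) b"

definition metric_delta :: "(R2 \<Rightarrow> R2 \<Rightarrow> R2 \<Rightarrow> real) \<Rightarrow> R2 \<Rightarrow> real" where
  "metric_delta g q = coefE g q * coefG g q - (coefF g q)^2"

text \<open>Computed in the coordinates (u,v) of the chart U (translated to be centred at p;
  translation does not change second derivatives).\<close>
definition intrinsic_cross_cap :: "R2 set \<Rightarrow> (R2 \<Rightarrow> R2 \<Rightarrow> R2 \<Rightarrow> real) \<Rightarrow> R2 \<Rightarrow> bool" where
  "intrinsic_cross_cap U g p \<longleftrightarrow> admissible_metric U g \<and> p \<in> U \<and> singular_point g p \<and>
     (let d = metric_delta g;
          duu = pderiv_dir (1,0) (pderiv_dir (1,0) d) p;
          dvv = pderiv_dir (0,1) (pderiv_dir (0,1) d) p;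
          duv = pderiv_dir (0,1) (pderiv_dir (1,0) d) p
      in duu * dvv - duv^2 \<noteq> 0)"

definition first_fundamental_form :: "(R2 \<Rightarrow> R3) \<Rightarrow> R2 \<Rightarrow> R2 \<Rightarrow> R2 \<Rightarrow> real" where
  "first_fundamental_form f q v w = frechet_derivative f (at q) v \<bullet> frechet_derivative f (at q) w"

end

theory Submission
  imports Defs
begin

text \<open>
  The first fundamental form \<open>g = df \<cdot> df\<close> of any smooth \<open>f\<close> is admissible: by the symmetry of
  second derivatives, the Kossowski pseudo-connection of \<open>g\<close> is
  \<open>\<Gamma>(X, Y, Z) = \<langle>D\<^sub>X (df Y), df Z\<rangle>\<close>, which vanishes at \<open>p\<close> when \<open>Z p\<close> is a null vector,
  i.e. when \<open>df\<^sub>p (Z p) = 0\<close>.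

  For the intrinsic cross cap condition, Lagrange's identity gives \<open>\<delta> = EG - F\<^sup>2 = \<bar>w\<bar>\<^sup>2\<close> with
  \<open>w = f\<^sub>u \<times> f\<^sub>v\<close>. At a singular point \<open>w p = 0\<close>, so the Hessian of \<open>\<delta>\<close> at \<open>p\<close> is
  \<open>2 \<langle>Dw\<^sub>p e\<^sub>i, Dw\<^sub>p e\<^sub>j\<rangle>\<close>, whose determinant is nonzero iff \<open>Dw\<^sub>p\<close> is injective.

  At a cross cap, \<open>\<Phi> \<circ> f \<circ> \<phi>\<close> is the Whitney umbrella \<open>N(u, v) = (u, uv, v\<^sup>2)\<close>, whose
  normal \<open>N\<^sub>u \<times> N\<^sub>v = (2v\<^sup>2, -2v, u)\<close> vanishes at the origin with injective derivative.
  Since a linear map \<open>P\<close> satisfies \<open>Pa \<times> Pb = cof(P) (a \<times> b)\<close>, the chain rule gives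
  \<open>cof(D\<Phi>) w = det D(\<phi>\<^sup>-\<^sup>1) \<cdot> (N\<^sub>u \<times> N\<^sub>v) \<circ> \<phi>\<^sup>-\<^sup>1\<close> near \<open>p\<close>. Both sides vanish at \<open>p\<close>,
  and differentiating there transfers the injectivity to \<open>Dw\<^sub>p\<close>.
\<close>

section \<open>Maps of class \<open>C\<^sup>k\<close>\<close>

lemma Ck_on_SucD: "Ck_on (Suc k) U f \<Longrightarrow> Ck_on k U f"
  by (induction k arbitrary: f) (auto intro: differentiable_imp_continuous_on)

lemma smooth_on_imp_Ck_on: "smooth_on U f \<Longrightarrow> Ck_on k U f"
  by (simp add: smooth_on_def)

lemma Ck_on_2_iff:
  "Ck_on 2 U f \<longleftrightarrow> f differentiable_on U \<and> (\<forall>a\<in>Basis. (\<lambda>x. frechet_derivative f (at x) a) differentiable_on U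
     \<and> (\<forall>b\<in>Basis. continuous_on U (\<lambda>x. frechet_derivative (\<lambda>y. frechet_derivative f (at y) a) (at x) b)))"
  by (simp add: numeral_2_eq_2)

lemma Ck_on_Suc_differentiable_at:
  "Ck_on (Suc k) U f \<Longrightarrow> open U \<Longrightarrow> x \<in> U \<Longrightarrow> f differentiable at x"
  by (simp add: differentiable_on_eq_differentiable_at)

lemma smooth_on_differentiable_at:
  "smooth_on U f \<Longrightarrow> open U \<Longrightarrow> x \<in> U \<Longrightarrow> f differentiable at x"
  by (meson Ck_on_Suc_differentiable_at smooth_on_imp_Ck_on)

lemma smooth_on_has_derivative:
  "smooth_on U f \<Longrightarrow> open U \<Longrightarrow> x \<in> U \<Longrightarrow> (f has_derivative frechet_derivative f (at x)) (at x)"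
  using frechet_derivative_works smooth_on_differentiable_at by blast

lemma smooth_on_partial:
  "smooth_on U f \<Longrightarrow> b \<in> Basis \<Longrightarrow> smooth_on U (\<lambda>x. frechet_derivative f (at x) b)"
  unfolding smooth_on_def by (metis Ck_on.simps(2))

lemma differentiable_on_transform_open:
  assumes "open U" "\<And>x. x \<in> U \<Longrightarrow> f x = g x" "f differentiable_on U"
  shows "g differentiable_on U"
  using assms unfolding differentiable_on_eq_differentiable_at[OF assms(1)] differentiable_def
  by (meson has_derivative_transform_within_open)

lemma Ck_on_cong:
  assumes "open U" "\<And>x. x \<in> U \<Longrightarrow> f x = g x" "Ck_on k U f"
  shows "Ck_on k U g"
  using assms
proof (induction k arbitrary: f g)
  case 0
  then show ?case using continuous_on_cong by force
next
  case (Suc k)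
  have deriv_eq: "frechet_derivative f (at x) = frechet_derivative g (at x)" if "x \<in> U" for x
    using Suc.prems that
    by (intro frechet_derivative_transform_within_open) (auto simp: differentiable_on_eq_differentiable_at)
  have "Ck_on k U (\<lambda>x. frechet_derivative g (at x) b)" if "b \<in> Basis" for b
  proof (rule Suc.IH[OF Suc.prems(1)])
    show "Ck_on k U (\<lambda>x. frechet_derivative f (at x) b)" using Suc.prems(3) that by simp
  qed (simp add: deriv_eq)
  moreover have "g differentiable_on U"
    using Suc.prems differentiable_on_transform_open by auto
  ultimately show ?case by simp
qed

lemma Ck_on_add:
  assumes "open U" "Ck_on k U a" "Ck_on k U b"
  shows "Ck_on k U (\<lambda>x. a x + b x)"
  using assms(2,3)
proof (induction k arbitrary: a b)
  case 0
  then show ?case by (auto intro: continuous_on_add)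
next
  case (Suc k)
  have deriv: "((\<lambda>x. a x + b x) has_derivative
      (\<lambda>h. frechet_derivative a (at x) h + frechet_derivative b (at x) h)) (at x)" if "x \<in> U" for x
    using Suc.prems that assms(1)
    by (intro has_derivative_add) (auto simp: frechet_derivative_works differentiable_on_eq_differentiable_at)
  have "Ck_on k U (\<lambda>x. frechet_derivative (\<lambda>x. a x + b x) (at x) e)" if "e \<in> Basis" for e
  proof (rule Ck_on_cong[OF assms(1)])
    show "Ck_on k U (\<lambda>x. frechet_derivative a (at x) e + frechet_derivative b (at x) e)"
      using Suc that by simp
    show "frechet_derivative a (at x) e + frechet_derivative b (at x) e
        = frechet_derivative (\<lambda>x. a x + b x) (at x) e" if "x \<in> U" for x
      by (rule fun_cong[OF frechet_derivative_at[OF deriv[OF that]]])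
  qed
  moreover have "(\<lambda>x. a x + b x) differentiable_on U"
    using deriv assms(1) by (auto simp: differentiable_on_eq_differentiable_at differentiable_def)
  ultimately show ?case by simp
qed

lemma Ck_on_bounded_bilinear:
  assumes B: "bounded_bilinear B" and "open U" "Ck_on k U a" "Ck_on k U b"
  shows "Ck_on k U (\<lambda>x. B (a x) (b x))"
  using assms(3,4)
proof (induction k arbitrary: a b)
  case 0
  then show ?case by (simp add: bounded_bilinear.continuous_on[OF B])
next
  case (Suc k)
  have deriv: "((\<lambda>x. B (a x) (b x)) has_derivative (\<lambda>h. B (a x) (frechet_derivative b (at x) h)
      + B (frechet_derivative a (at x) h) (b x))) (at x)" if "x \<in> U" for x
    using Suc.prems that assms(2)
    by (intro bounded_bilinear.FDERIV[OF B])
      (auto simp: frechet_derivative_works differentiable_on_eq_differentiable_at)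
  have "Ck_on k U (\<lambda>x. frechet_derivative (\<lambda>x. B (a x) (b x)) (at x) e)" if "e \<in> Basis" for e
  proof (rule Ck_on_cong[OF assms(2)])
    have "Ck_on k U a" "Ck_on k U b"
      using Suc.prems Ck_on_SucD by blast+
    then show "Ck_on k U (\<lambda>x. B (a x) (frechet_derivative b (at x) e)
        + B (frechet_derivative a (at x) e) (b x))"
      using Suc that by (intro Ck_on_add[OF assms(2)]) simp_all
    show "B (a x) (frechet_derivative b (at x) e) + B (frechet_derivative a (at x) e) (b x)
        = frechet_derivative (\<lambda>x. B (a x) (b x)) (at x) e" if "x \<in> U" for x
      by (rule fun_cong[OF frechet_derivative_at[OF deriv[OF that]]])
  qed
  moreover have "(\<lambda>x. B (a x) (b x)) differentiable_on U"
    using deriv assms(2) by (auto simp: differentiable_on_eq_differentiable_at differentiable_def)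
  ultimately show ?case by simp
qed

lemma smooth_on_bounded_bilinear:
  "bounded_bilinear B \<Longrightarrow> open U \<Longrightarrow> smooth_on U a \<Longrightarrow> smooth_on U b
    \<Longrightarrow> smooth_on U (\<lambda>x. B (a x) (b x))"
  unfolding smooth_on_def by (blast intro: Ck_on_bounded_bilinear)

lemma has_derivative_unique_on_open:
  assumes "(f has_derivative F) (at x)" "(g has_derivative G) (at x)" "open S" "x \<in> S"
    and "\<And>y. y \<in> S \<Longrightarrow> f y = g y"
  shows "F = G"
proof -
  have "(g has_derivative F) (at x)"
    using has_derivative_transform_within_open[OF assms(1,3,4,5)] .
  then show ?thesis
    using assms(2) by (rule has_derivative_unique)
qed

lemma has_derivative_bounded_bilinear_vanishing:
  assumes "bounded_bilinear B" "(a has_derivative a') (at x)" "(b has_derivative b') (at x)" "b x = 0"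
  shows "((\<lambda>y. B (a y) (b y)) has_derivative (\<lambda>h. B (a x) (b' h))) (at x)"
  using bounded_bilinear.FDERIV[OF assms(1-3)] assms(4) bounded_bilinear.zero_right[OF assms(1)] by simp

lemma differentiable_bounded_bilinear:
  "bounded_bilinear B \<Longrightarrow> a differentiable at x \<Longrightarrow> b differentiable at x
    \<Longrightarrow> (\<lambda>y. B (a y) (b y)) differentiable at x"
  unfolding differentiable_def by (blast intro: bounded_bilinear.FDERIV)

lemma diffeo_on_derivative_inverse:
  assumes \<phi>: "diffeo_on V \<phi>" and x: "x \<in> V"
  defines "\<psi> \<equiv> inv_into V \<phi>"
  shows "frechet_derivative \<psi> (at (\<phi> x)) (frechet_derivative \<phi> (at x) k) = k"
    and "frechet_derivative \<phi> (at x) (frechet_derivative \<psi> (at (\<phi> x)) k) = k"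
proof -
  have V: "open V" "open (\<phi> ` V)" and "inj_on \<phi> V" "\<phi> x \<in> \<phi> ` V"
    using \<phi> x unfolding diffeo_on_def by auto
  then have \<psi>\<phi>: "\<psi> (\<phi> y) = y" if "y \<in> V" for y
    using that unfolding \<psi>_def by simp
  have \<phi>\<psi>: "\<phi> (\<psi> y) = y" if "y \<in> \<phi> ` V" for y
    using that unfolding \<psi>_def by (simp add: f_inv_into_f)
  have d\<phi>: "(\<phi> has_derivative frechet_derivative \<phi> (at x)) (at x)"
    using \<phi> x V(1) smooth_on_has_derivative unfolding diffeo_on_def by blast
  have d\<psi>: "(\<psi> has_derivative frechet_derivative \<psi> (at (\<phi> x))) (at (\<phi> x))"
    using \<phi> \<open>\<phi> x \<in> \<phi> ` V\<close> V(2) smooth_on_has_derivative unfolding diffeo_on_def \<psi>_def by blast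
  have "(\<lambda>k. frechet_derivative \<psi> (at (\<phi> x)) (frechet_derivative \<phi> (at x) k)) = (\<lambda>k. k)"
    by (rule has_derivative_unique_on_open[OF has_derivative_compose[OF d\<phi> d\<psi>] has_derivative_ident V(1) x])
      (simp add: \<psi>\<phi>)
  then show "frechet_derivative \<psi> (at (\<phi> x)) (frechet_derivative \<phi> (at x) k) = k"
    by (rule fun_cong)
  have "(\<phi> has_derivative frechet_derivative \<phi> (at x)) (at (\<psi> (\<phi> x)))"
    using d\<phi> \<psi>\<phi>[OF x] by simp
  then have "(\<lambda>k. frechet_derivative \<phi> (at x) (frechet_derivative \<psi> (at (\<phi> x)) k)) = (\<lambda>k. k)"
    by (rule has_derivative_unique_on_open[OF has_derivative_compose[OF d\<psi>] has_derivative_ident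
          V(2) \<open>\<phi> x \<in> \<phi> ` V\<close>]) (simp add: \<phi>\<psi>)
  then show "frechet_derivative \<phi> (at x) (frechet_derivative \<psi> (at (\<phi> x)) k) = k"
    by (rule fun_cong)
qed

section \<open>Symmetry of second derivatives\<close>

lemma mean_value_segment:
  fixes g :: "'a::real_normed_vector \<Rightarrow> real"
  assumes "\<And>s. s \<in> {0..1} \<Longrightarrow> p + s *\<^sub>R a \<in> U"
    and "\<And>x. x \<in> U \<Longrightarrow> (g has_derivative g' x) (at x)"
  shows "\<exists>s\<in>{0<..<1}. g (p + a) - g p = g' (p + s *\<^sub>R a) a"
proof -
  have "\<exists>s\<in>{0<..<1::real}. g (p + 1 *\<^sub>R a) - g (p + 0 *\<^sub>R a) = g' (p + s *\<^sub>R a) ((1 - 0) *\<^sub>R a)"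
  proof (rule mvt_simple)
    fix s :: real
    assume "0 \<le> s" "s \<le> 1"
    then have "(g has_derivative g' (p + s *\<^sub>R a)) (at (p + s *\<^sub>R a))"
      using assms by simp
    moreover have "((\<lambda>s. p + s *\<^sub>R a) has_derivative (\<lambda>h. h *\<^sub>R a)) (at s within {0..1})"
      by (auto intro!: derivative_eq_intros)
    ultimately show "((\<lambda>s. g (p + s *\<^sub>R a)) has_derivative (\<lambda>h. g' (p + s *\<^sub>R a) (h *\<^sub>R a)))
        (at s within {0..1})"
      by (rule has_derivative_compose[rotated])
  qed simp
  then show ?thesis by simp
qed

lemma mean_value_second_difference:
  fixes g :: "'a::real_normed_vector \<Rightarrow> real"
  assumes box: "\<And>s r. s \<in> {0..1} \<Longrightarrow> r \<in> {0..1} \<Longrightarrow> p + s *\<^sub>R a + r *\<^sub>R b \<in> U"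
    and g': "\<And>x. x \<in> U \<Longrightarrow> (g has_derivative g' x) (at x)"
    and g'': "\<And>x. x \<in> U \<Longrightarrow> ((\<lambda>y. g' y a) has_derivative g'' x) (at x)"
  shows "\<exists>s\<in>{0<..<1}. \<exists>r\<in>{0<..<1}.
    g (p + a + b) - g (p + a) - g (p + b) + g p = g'' (p + s *\<^sub>R a + r *\<^sub>R b) b"
proof -
  have "\<exists>s\<in>{0<..<1}. (\<lambda>x. g (x + b) - g x) (p + a) - (\<lambda>x. g (x + b) - g x) p
      = g' (p + s *\<^sub>R a + b) a - g' (p + s *\<^sub>R a) a"
  proof (rule mean_value_segment[where U = "{x \<in> U. x + b \<in> U}"])
    show "p + s *\<^sub>R a \<in> {x \<in> U. x + b \<in> U}" if "s \<in> {0..1}" for s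
      using box[OF that, of 0] box[OF that, of 1] by (simp add: add.assoc)
    show "((\<lambda>x. g (x + b) - g x) has_derivative (\<lambda>h. g' (x + b) h - g' x h)) (at x)"
      if "x \<in> {x \<in> U. x + b \<in> U}" for x
    proof (rule has_derivative_diff)
      have shift: "((\<lambda>x. x + b) has_derivative (\<lambda>h. h)) (at x)"
        by (auto intro!: derivative_eq_intros)
      have "(g has_derivative g' (x + b)) (at (x + b))"
        using g' that by simp
      from has_derivative_compose[OF shift this]
      show "((\<lambda>x. g (x + b)) has_derivative g' (x + b)) (at x)"
        by simp
    qed (use g' that in simp)
  qed
  then obtain s where s: "s \<in> {0<..<1}"
    and outer: "g (p + a + b) - g (p + a) - g (p + b) + g p = g' (p + s *\<^sub>R a + b) a - g' (p + s *\<^sub>R a) a"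
    by (metis add.commute add_diff_eq diff_diff_eq2 diff_right_commute)
  have "\<exists>r\<in>{0<..<1}. g' (p + s *\<^sub>R a + b) a - g' (p + s *\<^sub>R a) a = g'' (p + s *\<^sub>R a + r *\<^sub>R b) b"
  proof (rule mean_value_segment[where U = U])
    show "p + s *\<^sub>R a + r *\<^sub>R b \<in> U" if "r \<in> {0..1}" for r
      using box that s by simp
  qed (rule g'')
  then show ?thesis
    using s outer by metis
qed

lemma second_difference_eq_mixed_partial:
  fixes g :: "'a::real_normed_vector \<Rightarrow> real"
  assumes box: "\<And>s r. s \<in> {0..1} \<Longrightarrow> r \<in> {0..1} \<Longrightarrow> p + s *\<^sub>R (t *\<^sub>R a) + r *\<^sub>R (t *\<^sub>R b) \<in> U"
    and U: "open U"
    and dg: "\<And>x. x \<in> U \<Longrightarrow> g differentiable at x"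
    and da: "\<And>x. x \<in> U \<Longrightarrow> (\<lambda>y. frechet_derivative g (at y) a) differentiable at x"
  shows "\<exists>s\<in>{0..1}. \<exists>r\<in>{0..1}. g (p + t *\<^sub>R a + t *\<^sub>R b) - g (p + t *\<^sub>R a) - g (p + t *\<^sub>R b) + g p
    = t * t * frechet_derivative (\<lambda>y. frechet_derivative g (at y) a)
        (at (p + s *\<^sub>R (t *\<^sub>R a) + r *\<^sub>R (t *\<^sub>R b))) b"
proof -
  define D2 where "D2 x = frechet_derivative (\<lambda>y. frechet_derivative g (at y) a) (at x)" for x
  have D2: "((\<lambda>y. frechet_derivative g (at y) a) has_derivative D2 x) (at x)" if "x \<in> U" for x
    using da[OF that] frechet_derivative_works unfolding D2_def by blast
  have "\<exists>s\<in>{0<..<1}. \<exists>r\<in>{0<..<1}. g (p + t *\<^sub>R a + t *\<^sub>R b) - g (p + t *\<^sub>R a) - g (p + t *\<^sub>R b) + g p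
      = t * D2 (p + s *\<^sub>R (t *\<^sub>R a) + r *\<^sub>R (t *\<^sub>R b)) (t *\<^sub>R b)"
  proof (rule mean_value_second_difference[OF box])
    show "(g has_derivative frechet_derivative g (at x)) (at x)" if "x \<in> U" for x
      using dg that frechet_derivative_works by blast
    show "((\<lambda>y. frechet_derivative g (at y) (t *\<^sub>R a)) has_derivative (\<lambda>k. t * D2 x k)) (at x)"
      if "x \<in> U" for x
    proof (rule has_derivative_transform_within_open[OF _ U that])
      show "((\<lambda>y. t * frechet_derivative g (at y) a) has_derivative (\<lambda>k. t * D2 x k)) (at x)"
        using D2[OF that] by (rule has_derivative_mult_right)
      show "t * frechet_derivative g (at y) a = frechet_derivative g (at y) (t *\<^sub>R a)" if "y \<in> U" for y
        using linear_scale[OF linear_frechet_derivative[OF dg[OF that]]] by simp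
    qed
  qed
  then obtain s r where sr: "s \<in> {0..1}" "r \<in> {0..1}"
    and diff: "g (p + t *\<^sub>R a + t *\<^sub>R b) - g (p + t *\<^sub>R a) - g (p + t *\<^sub>R b) + g p
      = t * D2 (p + s *\<^sub>R (t *\<^sub>R a) + r *\<^sub>R (t *\<^sub>R b)) (t *\<^sub>R b)"
    by (meson greaterThanLessThan_subseteq_atLeastAtMost_iff order_refl subsetD)
  have "D2 (p + s *\<^sub>R (t *\<^sub>R a) + r *\<^sub>R (t *\<^sub>R b)) (t *\<^sub>R b)
      = t * D2 (p + s *\<^sub>R (t *\<^sub>R a) + r *\<^sub>R (t *\<^sub>R b)) b"
    using linear_scale[OF has_derivative_linear[OF D2[OF box[OF sr]]]] by simp
  then have "g (p + t *\<^sub>R a + t *\<^sub>R b) - g (p + t *\<^sub>R a) - g (p + t *\<^sub>R b) + g p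
      = t * t * D2 (p + s *\<^sub>R (t *\<^sub>R a) + r *\<^sub>R (t *\<^sub>R b)) b"
    using diff by simp
  then show ?thesis
    using sr unfolding D2_def by blast
qed

lemma continuous_at_values_separated:
  fixes A B :: "'a::metric_space \<Rightarrow> real"
  assumes "continuous (at p) A" "continuous (at p) B" "A p \<noteq> B p"
  shows "\<exists>\<delta>>0. \<forall>x y. dist x p < \<delta> \<longrightarrow> dist y p < \<delta> \<longrightarrow> A x \<noteq> B y"
proof -
  define e where "e = \<bar>A p - B p\<bar> / 2"
  have "e > 0"
    using assms(3) by (simp add: e_def)
  then obtain d1 d2 where d1: "d1 > 0" "\<And>x. dist x p < d1 \<Longrightarrow> \<bar>A x - A p\<bar> < e"
    and d2: "d2 > 0" "\<And>x. dist x p < d2 \<Longrightarrow> \<bar>B x - B p\<bar> < e"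
    using assms(1,2) unfolding continuous_at_eps_delta dist_real_def by metis
  have "A x \<noteq> B y" if "dist x p < min d1 d2" "dist y p < min d1 d2" for x y
    using d1(2)[of x] d2(2)[of y] that unfolding e_def by (auto simp: abs_if split: if_splits)
  then show ?thesis
    using d1(1) d2(1) by (intro exI[of _ "min d1 d2"]) auto
qed

lemma dist_parallelogram_le:
  fixes a b :: "'a::real_normed_vector"
  assumes "s \<in> {0..1}" "r \<in> {0..1}" "t \<ge> 0"
  shows "dist (p + s *\<^sub>R (t *\<^sub>R a) + r *\<^sub>R (t *\<^sub>R b)) p \<le> t * (norm a + norm b)"
proof -
  have "norm (s *\<^sub>R (t *\<^sub>R a) + r *\<^sub>R (t *\<^sub>R b)) \<le> t * norm a + t * norm b"
    using assms by (intro norm_triangle_le add_mono) (auto simp: mult.assoc intro!: mult_left_le_one_le)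
  then show ?thesis
    by (simp add: dist_norm distrib_left)
qed

lemma second_partials_commute_real:
  fixes g :: "'a::real_normed_vector \<Rightarrow> real"
  assumes U: "open U" "p \<in> U"
    and dg: "\<And>x. x \<in> U \<Longrightarrow> g differentiable at x"
    and du: "\<And>x. x \<in> U \<Longrightarrow> (\<lambda>y. frechet_derivative g (at y) u) differentiable at x"
    and dv: "\<And>x. x \<in> U \<Longrightarrow> (\<lambda>y. frechet_derivative g (at y) v) differentiable at x"
    and cu: "continuous (at p) (\<lambda>x. frechet_derivative (\<lambda>y. frechet_derivative g (at y) u) (at x) v)"
    and cv: "continuous (at p) (\<lambda>x. frechet_derivative (\<lambda>y. frechet_derivative g (at y) v) (at x) u)"
  shows "frechet_derivative (\<lambda>y. frechet_derivative g (at y) u) (at p) v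
       = frechet_derivative (\<lambda>y. frechet_derivative g (at y) v) (at p) u"
proof (rule ccontr)
  define D2 where "D2 a x = frechet_derivative (\<lambda>y. frechet_derivative g (at y) a) (at x)" for a x
  assume "\<not> ?thesis"
  then obtain \<delta>0 where "\<delta>0 > 0" and near: "\<And>x y. dist x p < \<delta>0 \<Longrightarrow> dist y p < \<delta>0 \<Longrightarrow> D2 u x v \<noteq> D2 v y u"
    using continuous_at_values_separated[OF cu cv] unfolding D2_def by blast
  obtain R where "R > 0" "ball p R \<subseteq> U"
    using U open_contains_ball by blast
  define \<delta> where "\<delta> = min \<delta>0 R"
  have "\<delta> > 0"
    using \<open>\<delta>0 > 0\<close> \<open>R > 0\<close> by (simp add: \<delta>_def)
  have N: "norm u + norm v + 1 > 0"
    by (simp add: add_nonneg_pos)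
  obtain t where "t > 0" and t_small: "t * (norm u + norm v) < \<delta>"
  proof
    show "\<delta> / (norm u + norm v + 1) > 0"
      using \<open>\<delta> > 0\<close> N by simp
    show "\<delta> / (norm u + norm v + 1) * (norm u + norm v) < \<delta>"
      using \<open>\<delta> > 0\<close> N by (simp add: field_simps)
  qed
  have near_p: "dist (p + s *\<^sub>R (t *\<^sub>R a) + r *\<^sub>R (t *\<^sub>R b)) p < \<delta>"
    if "s \<in> {0..1}" "r \<in> {0..1}" "norm a + norm b = norm u + norm v" for s r a b
    using dist_parallelogram_le[OF that(1,2), of t p a b] \<open>t > 0\<close> t_small that(3) by simp
  have box: "p + s *\<^sub>R (t *\<^sub>R a) + r *\<^sub>R (t *\<^sub>R b) \<in> U"
    if "s \<in> {0..1}" "r \<in> {0..1}" "norm a + norm b = norm u + norm v" for s r a b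
    using near_p[OF that] \<open>ball p R \<subseteq> U\<close> by (auto simp: \<delta>_def dist_commute)
  have box_vu: "p + s *\<^sub>R (t *\<^sub>R v) + r *\<^sub>R (t *\<^sub>R u) \<in> U" if "s \<in> {0..1}" "r \<in> {0..1}" for s r
    using box[OF that, of v u] by (simp add: add.commute)
  obtain s r where "s \<in> {0..1}" "r \<in> {0..1}"
    and \<xi>: "g (p + t *\<^sub>R u + t *\<^sub>R v) - g (p + t *\<^sub>R u) - g (p + t *\<^sub>R v) + g p
      = t * t * D2 u (p + s *\<^sub>R (t *\<^sub>R u) + r *\<^sub>R (t *\<^sub>R v)) v"
    using second_difference_eq_mixed_partial[OF box U(1) dg du] unfolding D2_def by blast
  obtain s' r' where "s' \<in> {0..1}" "r' \<in> {0..1}"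
    and \<eta>: "g (p + t *\<^sub>R v + t *\<^sub>R u) - g (p + t *\<^sub>R v) - g (p + t *\<^sub>R u) + g p
      = t * t * D2 v (p + s' *\<^sub>R (t *\<^sub>R v) + r' *\<^sub>R (t *\<^sub>R u)) u"
    using second_difference_eq_mixed_partial[OF box_vu U(1) dg dv] unfolding D2_def by blast
  have "g (p + t *\<^sub>R v + t *\<^sub>R u) = g (p + t *\<^sub>R u + t *\<^sub>R v)"
    by (simp add: ac_simps)
  then have "t * t * D2 u (p + s *\<^sub>R (t *\<^sub>R u) + r *\<^sub>R (t *\<^sub>R v)) v
      = t * t * D2 v (p + s' *\<^sub>R (t *\<^sub>R v) + r' *\<^sub>R (t *\<^sub>R u)) u"
    using \<xi> \<eta> by linarith
  then have "D2 u (p + s *\<^sub>R (t *\<^sub>R u) + r *\<^sub>R (t *\<^sub>R v)) v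
      = D2 v (p + s' *\<^sub>R (t *\<^sub>R v) + r' *\<^sub>R (t *\<^sub>R u)) u"
    using \<open>t > 0\<close> by simp
  moreover have "dist (p + s *\<^sub>R (t *\<^sub>R u) + r *\<^sub>R (t *\<^sub>R v)) p < \<delta>0"
    "dist (p + s' *\<^sub>R (t *\<^sub>R v) + r' *\<^sub>R (t *\<^sub>R u)) p < \<delta>0"
    using near_p \<open>s \<in> {0..1}\<close> \<open>r \<in> {0..1}\<close> \<open>s' \<in> {0..1}\<close> \<open>r' \<in> {0..1}\<close>
    by (force simp: \<delta>_def add.commute)+
  ultimately show False
    using near by blast
qed

lemma has_derivative_partial_inner_const:
  fixes f :: "'a::real_normed_vector \<Rightarrow> 'b::real_inner"
  assumes U: "open U" "x \<in> U" and df: "\<And>y. y \<in> U \<Longrightarrow> f differentiable at y"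
    and dfa: "(\<lambda>y. frechet_derivative f (at y) a) differentiable at x"
  shows "((\<lambda>y. frechet_derivative (\<lambda>y. f y \<bullet> c) (at y) a) has_derivative
      (\<lambda>k. frechet_derivative (\<lambda>y. frechet_derivative f (at y) a) (at x) k \<bullet> c)) (at x)"
proof (rule has_derivative_transform_within_open[OF _ U])
  show "((\<lambda>y. frechet_derivative f (at y) a \<bullet> c) has_derivative
      (\<lambda>k. frechet_derivative (\<lambda>y. frechet_derivative f (at y) a) (at x) k \<bullet> c)) (at x)"
    using dfa frechet_derivative_works has_derivative_inner_left by blast
  show "frechet_derivative f (at y) a \<bullet> c = frechet_derivative (\<lambda>y. f y \<bullet> c) (at y) a" if "y \<in> U" for y
    by (rule fun_cong[OF frechet_derivative_at[OF has_derivative_inner_left[OF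
          frechet_derivative_works[THEN iffD1, OF df[OF that]]]]])
qed

text \<open>Schwarz's theorem for vector-valued maps follows from the real case applied to every
  component \<open>\<lambda>y. f y \<bullet> c\<close>.\<close>
lemma second_partials_commute:
  fixes f :: "'a::euclidean_space \<Rightarrow> 'b::real_inner"
  assumes U: "open U" "p \<in> U" and f: "Ck_on 2 U f" and uv: "u \<in> Basis" "v \<in> Basis"
  shows "frechet_derivative (\<lambda>y. frechet_derivative f (at y) u) (at p) v
       = frechet_derivative (\<lambda>y. frechet_derivative f (at y) v) (at p) u"
    (is "?Duv = ?Dvu")
proof -
  have df: "f differentiable at x" if "x \<in> U" for x
    using f that U(1) by (auto simp: Ck_on_2_iff differentiable_on_eq_differentiable_at)
  have dfa: "(\<lambda>y. frechet_derivative f (at y) a) differentiable at x" if "x \<in> U" "a \<in> Basis" for x a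
    using f that U(1) by (auto simp: Ck_on_2_iff differentiable_on_eq_differentiable_at)
  have "?Duv \<bullet> c = ?Dvu \<bullet> c" for c
  proof -
    define g where "g = (\<lambda>y. f y \<bullet> c)"
    have Dga: "((\<lambda>y. frechet_derivative g (at y) a) has_derivative
        (\<lambda>k. frechet_derivative (\<lambda>y. frechet_derivative f (at y) a) (at x) k \<bullet> c)) (at x)"
      if "x \<in> U" "a \<in> Basis" for x a
      unfolding g_def by (rule has_derivative_partial_inner_const[OF U(1) that(1) df dfa[OF that]])
    have cont: "continuous (at p) (\<lambda>x. frechet_derivative (\<lambda>y. frechet_derivative g (at y) a) (at x) b)"
      if "a \<in> Basis" "b \<in> Basis" for a b
    proof -
      have "continuous_on U (\<lambda>x. frechet_derivative (\<lambda>y. frechet_derivative f (at y) a) (at x) b \<bullet> c)"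
        using f that by (intro continuous_intros) (simp add: Ck_on_2_iff)
      then have "continuous_on U (\<lambda>x. frechet_derivative (\<lambda>y. frechet_derivative g (at y) a) (at x) b)"
        by (rule continuous_on_eq) (simp add: frechet_derivative_at[OF Dga, symmetric] that)
      then show ?thesis
        using U continuous_on_eq_continuous_at by blast
    qed
    have "frechet_derivative (\<lambda>y. frechet_derivative g (at y) u) (at p) v
        = frechet_derivative (\<lambda>y. frechet_derivative g (at y) v) (at p) u"
    proof (rule second_partials_commute_real[OF U])
      show "g differentiable at x" if "x \<in> U" for x
        using df[OF that] by (simp add: g_def)
    qed (use Dga cont uv in \<open>auto intro: differentiableI\<close>)
    then show ?thesis
      using frechet_derivative_at[OF Dga[OF U(2) uv(1)], symmetric]
        frechet_derivative_at[OF Dga[OF U(2) uv(2)], symmetric] by simp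
  qed
  from this[of "?Duv - ?Dvu"] have "(?Duv - ?Dvu) \<bullet> (?Duv - ?Dvu) = 0"
    by (simp only: inner_diff_left)
  then show ?thesis by simp
qed

section \<open>The first fundamental form is admissible\<close>

lemma Basis_R2: "(1, 0) \<in> (Basis :: R2 set)" "(0, 1) \<in> (Basis :: R2 set)"
  by (simp_all add: Basis_prod_def)

lemma linear_R2_expansion:
  fixes T :: "R2 \<Rightarrow> 'b::real_vector"
  assumes "linear T"
  shows "T z = fst z *\<^sub>R T (1, 0) + snd z *\<^sub>R T (0, 1)"
proof -
  have "T z = T (fst z *\<^sub>R (1, 0) + snd z *\<^sub>R (0, 1))"
    by (cases z) simp
  then show ?thesis
    by (simp only: linear_add[OF assms] linear_scale[OF assms])
qed

text \<open>\<open>second_derivative f p h k\<close> is \<open>D\<^sup>2f\<^sub>p(h, k)\<close>: the derivative at \<open>p\<close>, in direction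
  \<open>h\<close>, of \<open>q \<mapsto> df\<^sub>q k\<close>.\<close>
definition second_derivative :: "(R2 \<Rightarrow> 'b::real_normed_vector) \<Rightarrow> R2 \<Rightarrow> R2 \<Rightarrow> R2 \<Rightarrow> 'b" where
  "second_derivative f p h k =
     fst k *\<^sub>R frechet_derivative (\<lambda>q. frechet_derivative f (at q) (1, 0)) (at p) h
   + snd k *\<^sub>R frechet_derivative (\<lambda>q. frechet_derivative f (at q) (0, 1)) (at p) h"

lemma second_derivative_commute:
  fixes f :: "R2 \<Rightarrow> 'b::real_inner"
  assumes "open U" "p \<in> U" "Ck_on 2 U f"
  shows "second_derivative f p h k = second_derivative f p k h"
proof -
  define Du where "Du = frechet_derivative (\<lambda>q. frechet_derivative f (at q) (1, 0)) (at p)"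
  define Dv where "Dv = frechet_derivative (\<lambda>q. frechet_derivative f (at q) (0, 1)) (at p)"
  have "linear Du" "linear Dv"
    using assms Basis_R2 unfolding Du_def Dv_def
    by (auto intro!: linear_frechet_derivative simp: Ck_on_2_iff differentiable_on_eq_differentiable_at)
  moreover have "Du (0, 1) = Dv (1, 0)"
    unfolding Du_def Dv_def by (rule second_partials_commute[OF assms Basis_R2])
  ultimately show ?thesis
    unfolding second_derivative_def Du_def[symmetric] Dv_def[symmetric]
    by (simp add: linear_R2_expansion[of Du h] linear_R2_expansion[of Du k]
        linear_R2_expansion[of Dv h] linear_R2_expansion[of Dv k] algebra_simps)
qed

lemma has_derivative_frechet_derivative_along:
  fixes f :: "R2 \<Rightarrow> 'b::real_normed_vector"
  assumes U: "open U" "p \<in> U" and f: "Ck_on 2 U f" and Y: "Y differentiable at p"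
  shows "((\<lambda>q. frechet_derivative f (at q) (Y q)) has_derivative
      (\<lambda>h. frechet_derivative f (at p) (frechet_derivative Y (at p) h) + second_derivative f p h (Y p))) (at p)"
proof -
  define fu where "fu q = frechet_derivative f (at q) (1, 0)" for q
  define fv where "fv q = frechet_derivative f (at q) (0, 1)" for q
  have df: "f differentiable at q" if "q \<in> U" for q
    using f U(1) that by (simp add: Ck_on_2_iff differentiable_on_eq_differentiable_at)
  have "fu differentiable at p" "fv differentiable at p"
    using f U Basis_R2 unfolding fu_def fv_def
    by (auto simp: Ck_on_2_iff differentiable_on_eq_differentiable_at)
  then have D: "((\<lambda>q. fst (Y q) *\<^sub>R fu q + snd (Y q) *\<^sub>R fv q) has_derivative
      (\<lambda>h. fst (Y p) *\<^sub>R frechet_derivative fu (at p) h + fst (frechet_derivative Y (at p) h) *\<^sub>R fu p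
         + (snd (Y p) *\<^sub>R frechet_derivative fv (at p) h + snd (frechet_derivative Y (at p) h) *\<^sub>R fv p))) (at p)"
    using Y by (intro has_derivative_add has_derivative_scaleR has_derivative_fst has_derivative_snd)
      (auto simp: frechet_derivative_works)
  have eqU: "fst (Y q) *\<^sub>R fu q + snd (Y q) *\<^sub>R fv q = frechet_derivative f (at q) (Y q)"
    if "q \<in> U" for q
    unfolding fu_def fv_def
    by (rule linear_R2_expansion[symmetric], rule linear_frechet_derivative[OF df[OF that]])
  have eqD: "fst (Y p) *\<^sub>R frechet_derivative fu (at p) h + fst (frechet_derivative Y (at p) h) *\<^sub>R fu p
         + (snd (Y p) *\<^sub>R frechet_derivative fv (at p) h + snd (frechet_derivative Y (at p) h) *\<^sub>R fv p)
      = frechet_derivative f (at p) (frechet_derivative Y (at p) h) + second_derivative f p h (Y p)" for h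
    unfolding second_derivative_def fu_def fv_def
    using linear_R2_expansion[OF linear_frechet_derivative[OF df[OF U(2)]], of "frechet_derivative Y (at p) h"]
    by (simp add: algebra_simps)
  from has_derivative_transform_within_open[OF D U eqU] show ?thesis
    by (simp only: eqD)
qed

lemma frechet_derivative_metric_pair:
  assumes U: "open U" "p \<in> U" and f: "Ck_on 2 U f"
    and Y: "Y differentiable at p" and Z: "Z differentiable at p"
  defines "L \<equiv> frechet_derivative f (at p)"
  shows "frechet_derivative (metric_pair (first_fundamental_form f) Y Z) (at p) h
    = L (Y p) \<bullet> (L (frechet_derivative Z (at p) h) + second_derivative f p h (Z p))
    + (L (frechet_derivative Y (at p) h) + second_derivative f p h (Y p)) \<bullet> L (Z p)"
proof -
  have pair: "metric_pair (first_fundamental_form f) Y Z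
      = (\<lambda>q. frechet_derivative f (at q) (Y q) \<bullet> frechet_derivative f (at q) (Z q))"
    by (simp add: fun_eq_iff metric_pair_def first_fundamental_form_def)
  from has_derivative_inner[OF has_derivative_frechet_derivative_along[OF U f Y]
      has_derivative_frechet_derivative_along[OF U f Z]]
  show ?thesis
    unfolding pair L_def by (simp add: frechet_derivative_at[symmetric])
qed

lemma kossowski_first_fundamental_form:
  assumes U: "open U" "p \<in> U" and f: "Ck_on 2 U f"
    and X: "X differentiable at p" and Y: "Y differentiable at p" and Z: "Z differentiable at p"
  defines "L \<equiv> frechet_derivative f (at p)"
  shows "kossowski (first_fundamental_form f) X Y Z p
    = (L (frechet_derivative Y (at p) (X p)) + second_derivative f p (X p) (Y p)) \<bullet> L (Z p)"
proof -
  have "linear L"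
    using f U unfolding L_def
    by (auto intro: linear_frechet_derivative simp: Ck_on_2_iff differentiable_on_eq_differentiable_at)
  moreover have "second_derivative f p h k = second_derivative f p k h" for h k
    by (rule second_derivative_commute[OF U f])
  ultimately show ?thesis
    unfolding kossowski_def vf_deriv_def lie_bracket_def
      frechet_derivative_metric_pair[OF U f X Y] frechet_derivative_metric_pair[OF U f X Z]
      frechet_derivative_metric_pair[OF U f Y Z]
    unfolding L_def[symmetric] first_fundamental_form_def
    by (simp add: linear_diff inner_add_left inner_add_right inner_diff_left inner_diff_right
        inner_commute algebra_simps)
qed

lemma smooth_psd_metric_first_fundamental_form:
  assumes U: "open U" and f: "smooth_on U f"
  shows "smooth_psd_metric U (first_fundamental_form f)"
proof -
  have "bilinear (first_fundamental_form f q)" if "q \<in> U" for q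
  proof -
    have "bounded_linear (frechet_derivative f (at q))"
      using smooth_on_has_derivative[OF f U that] has_derivative_bounded_linear by blast
    then show ?thesis
      unfolding bilinear_def first_fundamental_form_def
      by (auto intro!: bounded_linear.linear bounded_linear_compose[OF bounded_linear_inner_left]
          bounded_linear_compose[OF bounded_linear_inner_right])
  qed
  moreover have "smooth_on U (\<lambda>q. first_fundamental_form f q a b)" if "a \<in> Basis" "b \<in> Basis" for a b
    unfolding first_fundamental_form_def
    by (rule smooth_on_bounded_bilinear[OF bounded_bilinear_inner U smooth_on_partial[OF f that(1)]
          smooth_on_partial[OF f that(2)]])
  then have "smooth_on U (coefE (first_fundamental_form f))" "smooth_on U (coefF (first_fundamental_form f))"
    "smooth_on U (coefG (first_fundamental_form f))"
    unfolding coefE_def coefF_def coefG_def using Basis_R2 by blast+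
  moreover have "first_fundamental_form f q v w = first_fundamental_form f q w v" for q v w
    unfolding first_fundamental_form_def by (rule inner_commute)
  moreover have "0 \<le> first_fundamental_form f q v v" for q v
    unfolding first_fundamental_form_def by simp
  ultimately show ?thesis
    using U unfolding smooth_psd_metric_def by blast
qed

lemma admissible_first_fundamental_form:
  assumes U: "open U" and f: "smooth_on U f"
  shows "admissible_metric U (first_fundamental_form f)"
  unfolding admissible_metric_def
proof (intro conjI smooth_psd_metric_first_fundamental_form[OF U f] ballI impI allI)
  fix p W and V1 V2 V3 :: "R2 \<Rightarrow> R2"
  assume "p \<in> U" and W: "open W \<and> p \<in> W \<and> W \<subseteq> U \<and> smooth_on W V1 \<and> smooth_on W V2
      \<and> smooth_on W V3 \<and> V3 p \<in> null_space (first_fundamental_form f) p"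
  then have "V1 differentiable at p" "V2 differentiable at p" "V3 differentiable at p"
    using smooth_on_differentiable_at by blast+
  moreover have "frechet_derivative f (at p) (V3 p) = 0"
  proof -
    have "frechet_derivative f (at p) (V3 p) \<bullet> frechet_derivative f (at p) (V3 p) = 0"
      using W unfolding null_space_def first_fundamental_form_def by blast
    then show ?thesis by simp
  qed
  ultimately show "kossowski (first_fundamental_form f) V1 V2 V3 p = 0"
    using kossowski_first_fundamental_form[OF U \<open>p \<in> U\<close> smooth_on_imp_Ck_on[OF f]] by simp
qed

section \<open>Cross products in \<open>\<real>\<^sup>3\<close>\<close>

definition cross_R3 :: "R3 \<Rightarrow> R3 \<Rightarrow> R3" where
  "cross_R3 a b = (fst (snd a) * snd (snd b) - snd (snd a) * fst (snd b),
                   snd (snd a) * fst b - fst a * snd (snd b),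
                   fst a * fst (snd b) - fst (snd a) * fst b)"

lemma inner_R3: "(a :: R3) \<bullet> b = fst a * fst b + fst (snd a) * fst (snd b) + snd (snd a) * snd (snd b)"
  by (simp add: inner_prod_def add.assoc)

lemma inner_cross_R3_self: "cross_R3 a b \<bullet> cross_R3 a b = (a \<bullet> a) * (b \<bullet> b) - (a \<bullet> b)\<^sup>2"
  unfolding inner_R3 cross_R3_def by (simp add: power2_eq_square algebra_simps)

lemma bounded_bilinear_cross_R3: "bounded_bilinear cross_R3"
proof -
  have "bilinear cross_R3"
    unfolding bilinear_def
    by (auto intro!: linearI simp: cross_R3_def algebra_simps)
  then show ?thesis
    by (simp add: bilinear_conv_bounded_bilinear)
qed

lemma cross_R3_eq_0_if_dependent:
  assumes "c *\<^sub>R a + d *\<^sub>R b = 0" "(c, d) \<noteq> (0, 0)"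
  shows "cross_R3 a b = 0"
proof (cases "c = 0")
  case True
  then have "b = 0" using assms by auto
  then show ?thesis by (simp add: cross_R3_def zero_prod_def)
next
  case False
  from assms(1) have "c *\<^sub>R a = (- d) *\<^sub>R b"
    by (simp add: eq_neg_iff_add_eq_0)
  then have "(1 / c) *\<^sub>R (c *\<^sub>R a) = (1 / c) *\<^sub>R ((- d) *\<^sub>R b)"
    by simp
  then have "a = (- d / c) *\<^sub>R b"
    using False by simp
  then show ?thesis by (simp add: cross_R3_def zero_prod_def algebra_simps)
qed

lemma linear_R3_expansion:
  fixes T :: "R3 \<Rightarrow> 'b::real_vector"
  assumes "linear T"
  shows "T y = fst y *\<^sub>R T (1, 0, 0) + fst (snd y) *\<^sub>R T (0, 1, 0) + snd (snd y) *\<^sub>R T (0, 0, 1)"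
proof -
  have "T y = T (fst y *\<^sub>R (1, 0, 0) + fst (snd y) *\<^sub>R (0, 1, 0) + snd (snd y) *\<^sub>R (0, 0, 1))"
    by (cases y) simp
  then show ?thesis
    by (simp only: linear_add[OF assms] linear_scale[OF assms])
qed

text \<open>A \<open>3 \<times> 3\<close> matrix is represented by the triple of its columns.\<close>
definition columns_apply :: "R3 \<times> R3 \<times> R3 \<Rightarrow> R3 \<Rightarrow> R3" where
  "columns_apply K y = fst y *\<^sub>R fst K + fst (snd y) *\<^sub>R fst (snd K) + snd (snd y) *\<^sub>R snd (snd K)"

lemma bounded_bilinear_columns_apply: "bounded_bilinear columns_apply"
proof -
  have "bilinear columns_apply"
    unfolding bilinear_def
    by (auto intro!: linearI simp: columns_apply_def algebra_simps)
  then show ?thesis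
    by (simp add: bilinear_conv_bounded_bilinear)
qed

definition cofactor_columns :: "(R3 \<Rightarrow> R3) \<Rightarrow> R3 \<times> R3 \<times> R3" where
  "cofactor_columns P = (cross_R3 (P (0, 1, 0)) (P (0, 0, 1)), cross_R3 (P (0, 0, 1)) (P (1, 0, 0)),
     cross_R3 (P (1, 0, 0)) (P (0, 1, 0)))"

lemma cross_R3_linear_image:
  assumes "linear P"
  shows "cross_R3 (P a) (P b) = columns_apply (cofactor_columns P) (cross_R3 a b)"
proof -
  obtain x1 y1 z1 x2 y2 z2 x3 y3 z3 where
    P: "P (1, 0, 0) = (x1, y1, z1)" "P (0, 1, 0) = (x2, y2, z2)" "P (0, 0, 1) = (x3, y3, z3)"
    by (metis prod.exhaust)
  show ?thesis
    unfolding linear_R3_expansion[OF assms, of a] linear_R3_expansion[OF assms, of b]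
    unfolding P cofactor_columns_def columns_apply_def cross_R3_def
    by (simp add: algebra_simps)
qed

section \<open>The normal field and intrinsic cross caps\<close>

definition normal_field :: "(R2 \<Rightarrow> R3) \<Rightarrow> R2 \<Rightarrow> R3" where
  "normal_field f q = cross_R3 (frechet_derivative f (at q) (1, 0)) (frechet_derivative f (at q) (0, 1))"

lemma metric_delta_first_fundamental_form:
  "metric_delta (first_fundamental_form f) q = normal_field f q \<bullet> normal_field f q"
  unfolding metric_delta_def coefE_def coefF_def coefG_def first_fundamental_form_def normal_field_def
  by (rule inner_cross_R3_self[symmetric])

lemma normal_field_eq_0_if_kernel:
  assumes "f differentiable at p" "z \<noteq> 0" "frechet_derivative f (at p) z = 0"
  shows "normal_field f p = 0"
proof -
  have "fst z *\<^sub>R frechet_derivative f (at p) (1, 0) + snd z *\<^sub>R frechet_derivative f (at p) (0, 1) = 0"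
    using assms(3) linear_R2_expansion[OF linear_frechet_derivative[OF assms(1)]] by metis
  moreover have "(fst z, snd z) \<noteq> (0, 0)"
    using assms(2) by (simp add: zero_prod_def)
  ultimately show ?thesis
    unfolding normal_field_def by (rule cross_R3_eq_0_if_dependent)
qed

lemma smooth_on_normal_field: "open U \<Longrightarrow> smooth_on U f \<Longrightarrow> smooth_on U (normal_field f)"
  unfolding normal_field_def
  by (intro smooth_on_bounded_bilinear[OF bounded_bilinear_cross_R3] smooth_on_partial Basis_R2)

lemma second_partial_inner_self_at_zero:
  fixes w :: "R2 \<Rightarrow> 'b::real_inner"
  assumes U: "open U" "p \<in> U" and w: "Ck_on 2 U w" and "w p = 0" and e: "e \<in> Basis"
  shows "pderiv_dir e' (pderiv_dir e (\<lambda>q. w q \<bullet> w q)) p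
    = 2 * (frechet_derivative w (at p) e \<bullet> frechet_derivative w (at p) e')"
proof -
  define we where "we q = frechet_derivative w (at q) e" for q
  have dw: "(w has_derivative frechet_derivative w (at q)) (at q)" if "q \<in> U" for q
  proof -
    have "w differentiable at q"
      using w U(1) that by (simp add: Ck_on_2_iff differentiable_on_eq_differentiable_at)
    then show ?thesis by (simp add: frechet_derivative_works)
  qed
  have "we differentiable at p"
    using w U e unfolding we_def by (auto simp: Ck_on_2_iff differentiable_on_eq_differentiable_at)
  then have dwe: "(we has_derivative frechet_derivative we (at p)) (at p)"
    by (simp add: frechet_derivative_works)
  have first: "2 * (w q \<bullet> we q) = pderiv_dir e (\<lambda>q. w q \<bullet> w q) q" if "q \<in> U" for q
  proof -
    have "pderiv_dir e (\<lambda>q. w q \<bullet> w q) q = w q \<bullet> we q + we q \<bullet> w q"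
      using fun_cong[OF frechet_derivative_at[OF has_derivative_inner[OF dw[OF that] dw[OF that]]], of e]
      unfolding pderiv_dir_def we_def by simp
    then show ?thesis
      using inner_commute[of "we q" "w q"] by linarith
  qed
  have D: "((\<lambda>q. 2 * (w q \<bullet> we q)) has_derivative
      (\<lambda>h. 2 * (w p \<bullet> frechet_derivative we (at p) h + frechet_derivative w (at p) h \<bullet> we p))) (at p)"
    by (intro has_derivative_mult_right has_derivative_inner dw dwe U(2))
  from has_derivative_transform_within_open[OF D U first]
  have "(pderiv_dir e (\<lambda>q. w q \<bullet> w q) has_derivative
      (\<lambda>h. 2 * (w p \<bullet> frechet_derivative we (at p) h + frechet_derivative w (at p) h \<bullet> we p))) (at p)" .
  from fun_cong[OF frechet_derivative_at[OF this], of e'] show ?thesis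
    unfolding pderiv_dir_def[of e'] we_def using \<open>w p = 0\<close> by (simp add: inner_commute)
qed

lemma gram_det_neq_0_if_injective:
  fixes L :: "R2 \<Rightarrow> 'b::real_inner"
  assumes L: "linear L" and inj: "\<And>h. L h = 0 \<Longrightarrow> h = 0"
  shows "(L (1, 0) \<bullet> L (1, 0)) * (L (0, 1) \<bullet> L (0, 1)) - (L (1, 0) \<bullet> L (0, 1))\<^sup>2 \<noteq> 0"
proof
  define a b where "a = L (1, 0)" and "b = L (0, 1)"
  assume gram: "(L (1, 0) \<bullet> L (1, 0)) * (L (0, 1) \<bullet> L (0, 1)) - (L (1, 0) \<bullet> L (0, 1))\<^sup>2 = 0"
  have "a \<noteq> 0"
    using inj[of "(1, 0)"] by (auto simp: a_def zero_prod_def)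
  then have aa: "a \<bullet> a > 0" by simp
  define t where "t = (a \<bullet> b) / (a \<bullet> a)"
  have "(b - t *\<^sub>R a) \<bullet> (b - t *\<^sub>R a) = ((a \<bullet> a) * (b \<bullet> b) - (a \<bullet> b)\<^sup>2) / (a \<bullet> a)"
    using aa unfolding t_def
    by (simp add: inner_diff_left inner_diff_right inner_commute field_simps power2_eq_square)
  also have "\<dots> = 0"
    using gram by (simp add: a_def b_def)
  finally have "L (- t, 1) = 0"
    using linear_R2_expansion[OF L, of "(- t, 1)"] by (simp add: a_def b_def)
  from inj[OF this] show False
    by (simp add: zero_prod_def)
qed

lemma intrinsic_cross_cap_first_fundamental_form:
  assumes U: "open U" "p \<in> U" and f: "smooth_on U f"
    and kernel: "z \<noteq> 0" "frechet_derivative f (at p) z = 0"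
    and normal_inj: "\<And>h. frechet_derivative (normal_field f) (at p) h = 0 \<Longrightarrow> h = 0"
  shows "intrinsic_cross_cap U (first_fundamental_form f) p"
proof -
  define Dw where "Dw = frechet_derivative (normal_field f) (at p)"
  have w: "Ck_on 2 U (normal_field f)"
    using smooth_on_normal_field[OF U(1) f] by (rule smooth_on_imp_Ck_on)
  have "normal_field f p = 0"
    using normal_field_eq_0_if_kernel[OF smooth_on_differentiable_at[OF f U] kernel] .
  then have hess: "pderiv_dir e' (pderiv_dir e (metric_delta (first_fundamental_form f))) p
      = 2 * (Dw e \<bullet> Dw e')"
    if "e \<in> Basis" for e e'
    unfolding metric_delta_first_fundamental_form[abs_def] Dw_def
    by (rule second_partial_inner_self_at_zero[OF U w _ that])
  have "linear Dw"
    unfolding Dw_def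
    by (rule linear_frechet_derivative,
        rule smooth_on_differentiable_at[OF smooth_on_normal_field[OF U(1) f] U])
  then have "(Dw (1, 0) \<bullet> Dw (1, 0)) * (Dw (0, 1) \<bullet> Dw (0, 1)) - (Dw (1, 0) \<bullet> Dw (0, 1))\<^sup>2 \<noteq> 0"
    using gram_det_neq_0_if_injective normal_inj unfolding Dw_def by blast
  moreover have "singular_point (first_fundamental_form f) p"
    unfolding singular_point_def first_fundamental_form_def
    using kernel by (metis inner_zero_left less_irrefl)
  ultimately show ?thesis
    unfolding intrinsic_cross_cap_def Let_def hess[OF Basis_R2(1)] hess[OF Basis_R2(2)]
    using admissible_first_fundamental_form[OF U(1) f] U(2)
    by (simp add: inner_commute power2_eq_square algebra_simps)
qed

section \<open>Cross caps\<close>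

definition det_R2 :: "(R2 \<Rightarrow> R2) \<Rightarrow> real" where
  "det_R2 M = fst (M (1, 0)) * snd (M (0, 1)) - fst (M (0, 1)) * snd (M (1, 0))"

lemma det_R2_neq_0_if_right_inverse:
  assumes M: "linear M" and MN: "\<And>k. M (N k) = k"
  shows "det_R2 M \<noteq> 0"
proof -
  define a where "a = M (1, 0)"
  define b where "b = M (0, 1)"
  have col: "fst (N e) *\<^sub>R a + snd (N e) *\<^sub>R b = e" for e
    using linear_R2_expansion[OF M, of "N e"] MN unfolding a_def b_def by simp
  have "det_R2 M * (fst (N (1, 0)) * snd (N (0, 1)) - fst (N (0, 1)) * snd (N (1, 0)))
      = fst (fst (N (1, 0)) *\<^sub>R a + snd (N (1, 0)) *\<^sub>R b) * snd (fst (N (0, 1)) *\<^sub>R a + snd (N (0, 1)) *\<^sub>R b)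
      - fst (fst (N (0, 1)) *\<^sub>R a + snd (N (0, 1)) *\<^sub>R b) * snd (fst (N (1, 0)) *\<^sub>R a + snd (N (1, 0)) *\<^sub>R b)"
    unfolding det_R2_def a_def[symmetric] b_def[symmetric] by (simp add: algebra_simps)
  also have "\<dots> = 1"
    unfolding col by simp
  finally show ?thesis by auto
qed

definition whitney_umbrella :: "R2 \<Rightarrow> R3" where
  "whitney_umbrella x = (fst x, fst x * snd x, snd x ^ 2)"

definition whitney_umbrella_derivative :: "R2 \<Rightarrow> R2 \<Rightarrow> R3" where
  "whitney_umbrella_derivative x k = (fst k, snd x * fst k + fst x * snd k, 2 * snd x * snd k)"

definition umbrella_normal :: "R2 \<Rightarrow> R3" where
  "umbrella_normal x = (2 * snd x ^ 2, - 2 * snd x, fst x)"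

lemma has_derivative_whitney_umbrella:
  "(whitney_umbrella has_derivative whitney_umbrella_derivative x) (at x)"
proof -
  have "((\<lambda>x. (fst x, fst x * snd x, snd x ^ 2)) has_derivative
      (\<lambda>k. (fst k, fst x * snd k + fst k * snd x, of_nat 2 * snd k * snd x ^ (2 - 1)))) (at x)"
    by (intro has_derivative_Pair has_derivative_mult has_derivative_power has_derivative_fst
        has_derivative_snd has_derivative_ident)
  then show ?thesis
    by (simp add: whitney_umbrella_def[abs_def] whitney_umbrella_derivative_def[abs_def] algebra_simps)
qed

lemma has_derivative_umbrella_normal:
  "(umbrella_normal has_derivative (\<lambda>k. (4 * snd x * snd k, - 2 * snd k, fst k))) (at x)"
proof -
  have "((\<lambda>x. (2 * snd x ^ 2, - 2 * snd x, fst x)) has_derivative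
      (\<lambda>k. (2 * (of_nat 2 * snd k * snd x ^ (2 - 1)), - 2 * snd k, fst k))) (at x)"
    by (intro has_derivative_Pair has_derivative_mult_right has_derivative_power has_derivative_fst
        has_derivative_snd has_derivative_ident)
  then show ?thesis
    by (simp add: umbrella_normal_def[abs_def] algebra_simps)
qed

lemma cross_whitney_umbrella_derivative:
  "cross_R3 (whitney_umbrella_derivative x h) (whitney_umbrella_derivative x k)
    = (fst h * snd k - fst k * snd h) *\<^sub>R umbrella_normal x"
  unfolding whitney_umbrella_derivative_def umbrella_normal_def cross_R3_def
  by (simp add: power2_eq_square algebra_simps)

locale cross_cap_chart =
  fixes U :: "R2 set" and f :: "R2 \<Rightarrow> R3" and p :: R2
    and V :: "R2 set" and \<phi> :: "R2 \<Rightarrow> R2" and W :: "R3 set" and \<Phi> :: "R3 \<Rightarrow> R3"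
  assumes open_U: "open U" and smooth_f: "smooth_on U f"
    and zero_in_V: "0 \<in> V" and diffeo_\<phi>: "diffeo_on V \<phi>" and \<phi>_zero: "\<phi> 0 = p"
    and patch_subset: "\<phi> ` V \<subseteq> U"
    and diffeo_\<Phi>: "diffeo_on W \<Phi>" and image_subset: "f ` \<phi> ` V \<subseteq> W"
    and normal_form: "\<And>u v. (u, v) \<in> V \<Longrightarrow> \<Phi> (f (\<phi> (u, v))) = (u, u * v, v ^ 2)"

lemma cross_cap_chart_exists:
  "open U \<Longrightarrow> smooth_on U f \<Longrightarrow> cross_cap U f p \<Longrightarrow> \<exists>V \<phi> W \<Phi>. cross_cap_chart U f p V \<phi> W \<Phi>"
  unfolding cross_cap_def cross_cap_chart_def by blast

context cross_cap_chart
begin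

abbreviation patch :: "R2 set" where "patch \<equiv> \<phi> ` V"

abbreviation coords :: "R2 \<Rightarrow> R2" where "coords \<equiv> inv_into V \<phi>"

lemma open_patch: "open patch"
  using diffeo_\<phi> by (simp add: diffeo_on_def)

lemma p_in_patch: "p \<in> patch"
  using zero_in_V \<phi>_zero by force

lemma inj_\<phi>: "inj_on \<phi> V"
  using diffeo_\<phi> by (simp add: diffeo_on_def)

lemma coords_p_eq_0: "coords p = 0"
  using inv_into_f_f[OF inj_\<phi> zero_in_V] \<phi>_zero by simp

lemma p_in_U: "p \<in> U"
  using p_in_patch patch_subset by blast

lemma f_p_in_W: "f p \<in> W"
  using image_subset p_in_patch by blast

lemma has_derivative_f: "q \<in> U \<Longrightarrow> (f has_derivative frechet_derivative f (at q)) (at q)"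
  using smooth_on_has_derivative[OF smooth_f open_U] .

lemma has_derivative_coords: "q \<in> patch \<Longrightarrow> (coords has_derivative frechet_derivative coords (at q)) (at q)"
  using diffeo_\<phi> open_patch smooth_on_has_derivative unfolding diffeo_on_def by blast

lemma has_derivative_\<Phi>: "y \<in> W \<Longrightarrow> (\<Phi> has_derivative frechet_derivative \<Phi> (at y)) (at y)"
  using diffeo_\<Phi> smooth_on_has_derivative unfolding diffeo_on_def by blast

lemma normal_form_coords:
  assumes "q \<in> patch"
  shows "\<Phi> (f q) = whitney_umbrella (coords q)"
proof -
  obtain x where x: "x \<in> V" "q = \<phi> x"
    using assms by blast
  then have "coords q = x"
    using inj_\<phi> by simp
  then show ?thesis
    using normal_form[of "fst x" "snd x"] x by (simp add: whitney_umbrella_def)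
qed

lemma derivative_normal_form:
  assumes q: "q \<in> patch"
  shows "frechet_derivative \<Phi> (at (f q)) (frechet_derivative f (at q) k)
    = whitney_umbrella_derivative (coords q) (frechet_derivative coords (at q) k)"
proof -
  have "f q \<in> W" "q \<in> U"
    using q image_subset patch_subset by blast+
  then have D1: "((\<lambda>x. \<Phi> (f x)) has_derivative
      (\<lambda>k. frechet_derivative \<Phi> (at (f q)) (frechet_derivative f (at q) k))) (at q)"
    using has_derivative_compose[OF has_derivative_f has_derivative_\<Phi>] by blast
  have D2: "((\<lambda>x. whitney_umbrella (coords x)) has_derivative
      (\<lambda>k. whitney_umbrella_derivative (coords q) (frechet_derivative coords (at q) k))) (at q)"
    using has_derivative_compose[OF has_derivative_coords[OF q] has_derivative_whitney_umbrella] .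
  have "(\<lambda>k. frechet_derivative \<Phi> (at (f q)) (frechet_derivative f (at q) k))
      = (\<lambda>k. whitney_umbrella_derivative (coords q) (frechet_derivative coords (at q) k))"
    by (rule has_derivative_unique_on_open[OF D1 D2 open_patch q]) (simp add: normal_form_coords)
  then show ?thesis
    by (rule fun_cong)
qed

lemma kernel_derivative_f_nontrivial:
  "\<exists>z. z \<noteq> 0 \<and> frechet_derivative f (at p) z = 0"
proof -
  \<comment> \<open>\<open>\<partial>\<^sub>v\<close> is the null direction of the umbrella at the origin.\<close>
  define z where "z = frechet_derivative \<phi> (at 0) (0, 1)"
  have coords_z: "frechet_derivative coords (at p) z = (0, 1)"
    using diffeo_on_derivative_inverse(1)[OF diffeo_\<phi> zero_in_V] unfolding z_def \<phi>_zero .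
  have "linear (frechet_derivative coords (at p))"
    using has_derivative_coords[OF p_in_patch] by (rule has_derivative_linear)
  then have "z \<noteq> 0"
    using coords_z linear_0 by (metis zero_neq_one snd_conv zero_prod_def)
  have "frechet_derivative \<Phi> (at (f p)) (frechet_derivative f (at p) z) = 0"
    unfolding derivative_normal_form[OF p_in_patch] coords_z coords_p_eq_0
    by (simp add: whitney_umbrella_derivative_def zero_prod_def)
  then have "frechet_derivative f (at p) z
      = frechet_derivative (inv_into W \<Phi>) (at (\<Phi> (f p))) 0"
    using diffeo_on_derivative_inverse(1)[OF diffeo_\<Phi> f_p_in_W] by metis
  also have "\<dots> = 0"
  proof -
    have "\<Phi> (f p) \<in> \<Phi> ` W"
      using f_p_in_W by blast
    then have "(inv_into W \<Phi>) differentiable at (\<Phi> (f p))"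
      using diffeo_\<Phi> smooth_on_differentiable_at unfolding diffeo_on_def by blast
    then show ?thesis
      using linear_0 linear_frechet_derivative by blast
  qed
  finally show ?thesis
    using \<open>z \<noteq> 0\<close> by blast
qed

lemma normal_field_identity:
  assumes q: "q \<in> patch"
  shows "columns_apply (cofactor_columns (frechet_derivative \<Phi> (at (f q)))) (normal_field f q)
    = det_R2 (frechet_derivative coords (at q)) *\<^sub>R umbrella_normal (coords q)"
proof -
  have "f q \<in> W"
    using q image_subset by blast
  then have "linear (frechet_derivative \<Phi> (at (f q)))"
    using has_derivative_\<Phi> has_derivative_linear by blast
  then have "columns_apply (cofactor_columns (frechet_derivative \<Phi> (at (f q)))) (normal_field f q)
      = cross_R3 (frechet_derivative \<Phi> (at (f q)) (frechet_derivative f (at q) (1, 0)))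
          (frechet_derivative \<Phi> (at (f q)) (frechet_derivative f (at q) (0, 1)))"
    unfolding normal_field_def by (rule cross_R3_linear_image[symmetric])
  also have "\<dots> = det_R2 (frechet_derivative coords (at q)) *\<^sub>R umbrella_normal (coords q)"
    unfolding derivative_normal_form[OF q] cross_whitney_umbrella_derivative det_R2_def ..
  finally show ?thesis .
qed

lemma normal_field_p_eq_0: "normal_field f p = 0"
  using kernel_derivative_f_nontrivial normal_field_eq_0_if_kernel
    smooth_on_differentiable_at[OF smooth_f open_U p_in_U]
  by blast

lemma differentiable_cofactor_columns:
  "(\<lambda>q. cofactor_columns (frechet_derivative \<Phi> (at (f q)))) differentiable at p"
proof -
  have "(\<lambda>q. frechet_derivative \<Phi> (at (f q)) e) differentiable at p" if "e \<in> Basis" for e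
  proof (rule differentiable_compose[of "\<lambda>y. frechet_derivative \<Phi> (at y) e"])
    show "(\<lambda>y. frechet_derivative \<Phi> (at y) e) differentiable at (f p)"
      using diffeo_\<Phi> f_p_in_W that smooth_on_differentiable_at smooth_on_partial
      unfolding diffeo_on_def by blast
    show "f differentiable at p"
      using smooth_on_differentiable_at[OF smooth_f open_U p_in_U] .
  qed
  moreover have "(1, 0, 0) \<in> (Basis :: R3 set)" "(0, 1, 0) \<in> (Basis :: R3 set)" "(0, 0, 1) \<in> (Basis :: R3 set)"
    by (simp_all add: Basis_prod_def zero_prod_def)
  ultimately show ?thesis
    unfolding cofactor_columns_def
    by (intro differentiable_Pair differentiable_bounded_bilinear[OF bounded_bilinear_cross_R3]) auto
qed

lemma differentiable_det_coords: "(\<lambda>q. det_R2 (frechet_derivative coords (at q))) differentiable at p"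
proof -
  have dm: "(\<lambda>q. frechet_derivative coords (at q) e) differentiable at p" if "e \<in> Basis" for e
    using diffeo_\<phi> p_in_patch open_patch that smooth_on_differentiable_at smooth_on_partial
    unfolding diffeo_on_def by blast
  have "(\<lambda>q. fst (frechet_derivative coords (at q) e)) differentiable at p"
    "(\<lambda>q. snd (frechet_derivative coords (at q) e)) differentiable at p" if "e \<in> Basis" for e
    using differentiable_compose[OF bounded_linear_imp_differentiable[OF bounded_linear_fst] dm[OF that]]
      differentiable_compose[OF bounded_linear_imp_differentiable[OF bounded_linear_snd] dm[OF that]]
    by simp_all
  then show ?thesis
    unfolding det_R2_def using Basis_R2 by (intro differentiable_diff differentiable_mult) auto
qed

lemma det_derivative_coords_p_neq_0: "det_R2 (frechet_derivative coords (at p)) \<noteq> 0"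
proof (rule det_R2_neq_0_if_right_inverse)
  show "linear (frechet_derivative coords (at p))"
    using has_derivative_coords[OF p_in_patch] by (rule has_derivative_linear)
  show "frechet_derivative coords (at p) (frechet_derivative \<phi> (at 0) k) = k" for k
    using diffeo_on_derivative_inverse(1)[OF diffeo_\<phi> zero_in_V] by (simp add: \<phi>_zero)
qed

text \<open>The derivative at \<open>p\<close> of the identity of \<open>normal_field_identity\<close>: both
  \<open>normal_field f\<close> and \<open>umbrella_normal \<circ> coords\<close> vanish at \<open>p\<close>, so only the
  derivatives of these factors survive.\<close>
lemma derivative_normal_field_identity:
  defines "Dc \<equiv> frechet_derivative coords (at p)"
  shows "columns_apply (cofactor_columns (frechet_derivative \<Phi> (at (f p))))
      (frechet_derivative (normal_field f) (at p) k)
    = det_R2 Dc *\<^sub>R (0, - 2 * snd (Dc k), fst (Dc k))"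
proof -
  define K where "K q = cofactor_columns (frechet_derivative \<Phi> (at (f q)))" for q
  define J where "J q = det_R2 (frechet_derivative coords (at q))" for q
  obtain K' where K': "(K has_derivative K') (at p)"
    using differentiable_cofactor_columns unfolding K_def differentiable_def by blast
  obtain J' where J': "(J has_derivative J') (at p)"
    using differentiable_det_coords unfolding J_def differentiable_def by blast
  have w: "(normal_field f has_derivative frechet_derivative (normal_field f) (at p)) (at p)"
    using smooth_on_has_derivative[OF smooth_on_normal_field[OF open_U smooth_f] open_U p_in_U] .
  have "((\<lambda>q. umbrella_normal (coords q)) has_derivative (\<lambda>k. (0, - 2 * snd (Dc k), fst (Dc k)))) (at p)"
    using has_derivative_compose[OF has_derivative_coords[OF p_in_patch] has_derivative_umbrella_normal]
    unfolding coords_p_eq_0 Dc_def by simp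
  then have rhs: "((\<lambda>q. J q *\<^sub>R umbrella_normal (coords q)) has_derivative
      (\<lambda>k. J p *\<^sub>R (0, - 2 * snd (Dc k), fst (Dc k)))) (at p)"
    by (rule has_derivative_bounded_bilinear_vanishing[OF bounded_bilinear_scaleR J'])
      (simp add: coords_p_eq_0 umbrella_normal_def zero_prod_def)
  have lhs: "((\<lambda>q. columns_apply (K q) (normal_field f q)) has_derivative
      (\<lambda>k. columns_apply (K p) (frechet_derivative (normal_field f) (at p) k))) (at p)"
    by (rule has_derivative_bounded_bilinear_vanishing[OF bounded_bilinear_columns_apply K' w
          normal_field_p_eq_0])
  have "(\<lambda>k. columns_apply (K p) (frechet_derivative (normal_field f) (at p) k))
      = (\<lambda>k. J p *\<^sub>R (0, - 2 * snd (Dc k), fst (Dc k)))"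
    by (rule has_derivative_unique_on_open[OF lhs rhs open_patch p_in_patch])
      (simp add: K_def J_def normal_field_identity)
  then show ?thesis
    unfolding K_def J_def Dc_def by (rule fun_cong)
qed

lemma derivative_normal_field_injective:
  assumes "frechet_derivative (normal_field f) (at p) h = 0"
  shows "h = 0"
proof -
  define Dc where "Dc = frechet_derivative coords (at p)"
  have "det_R2 Dc *\<^sub>R ((0::real), - 2 * snd (Dc h), fst (Dc h)) = 0"
    using derivative_normal_field_identity[of h] assms
      bounded_bilinear.zero_right[OF bounded_bilinear_columns_apply] unfolding Dc_def by simp
  then have "Dc h = 0"
    using det_derivative_coords_p_neq_0 by (simp add: Dc_def prod_eq_iff zero_prod_def)
  moreover have "linear (frechet_derivative \<phi> (at 0))"
    using diffeo_\<phi> zero_in_V smooth_on_has_derivative has_derivative_linear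
    unfolding diffeo_on_def by blast
  ultimately show "h = 0"
    using diffeo_on_derivative_inverse(2)[OF diffeo_\<phi> zero_in_V] linear_0 by (metis Dc_def \<phi>_zero)
qed

end

theorem corollary4p5:
  fixes U :: "R2 set" and f :: "R2 \<Rightarrow> R3" and p :: R2
  assumes "open U" and "smooth_on U f" and "p \<in> U" and "cross_cap U f p"
  shows "admissible_metric U (first_fundamental_form f)
         \<and> intrinsic_cross_cap U (first_fundamental_form f) p"
proof -
  obtain V \<phi> W \<Phi> where "cross_cap_chart U f p V \<phi> W \<Phi>"
    using cross_cap_chart_exists assms(1,2,4) by blast
  then interpret cross_cap_chart U f p V \<phi> W \<Phi> .
  obtain z where "z \<noteq> 0" "frechet_derivative f (at p) z = 0"
    using kernel_derivative_f_nontrivial by blast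
  then show ?thesis
    using admissible_first_fundamental_form[OF assms(1,2)]
      intrinsic_cross_cap_first_fundamental_form[OF assms(1,3,2)] derivative_normal_field_injective
    by blast
qed

end
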